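(* Let $k\ge 1$ and let $r_1,\ldots,r_k$ be $k$ travel requests whose arrivals follow independent Poisson processes with rates $\alpha_1,\ldots,\alpha_k>0$, respectively. Let $\bar t>0$. Then the probability that all $k$ requests have an occurrence within a time interval of length at most $\bar t$, i.e. the probability that $\max\{E_1,\ldots,E_k\}-\min\{E_1,\ldots,E_k\}\le \bar t$ where $E_i\sim\mathrm{Exp}(\alpha_i)$ are the independent times until the first occurrence of request $r_i$, equals $$P_{\bar{t}}(\alpha_{1}, \ldots, \alpha_{k})=\sum_{i=1}^{k} \frac{\alpha_{i}}{\sum_{j=1}^{k} \alpha_{j}} \prod_{\substack{j=1\\ j\neq i}}^{k}\left(1-e^{-\alpha_{j} \bar{t}}\right).$$
   Context: The time until the first occurrence of a Poisson process with rate $\alpha$ is exponentially distributed with parameter $\alpha$. *)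

theory Defs
  imports "HOL-Probability.Probability"
begin

end

theory Submission
  imports Defs
begin

(* Split the event according to the index i at which the minimum is first attained.  Given
   E_i = y, the event says that every other E_j lies in an interval of length t starting at y;
   by independence this has probability prod_{j <> i} exp(-a_j y) (1 - exp(-a_j t)).
   Integrating against the density a_i exp(-a_i y) gives the i-th summand
   a_i / (sum_j a_j) * prod_{j <> i} (1 - exp(-a_j t)). *)

lemma real_distribution_exponential_density:
  "0 < l \<Longrightarrow> real_distribution (density lborel (exponential_density l))"
  by (simp add: real_distribution_def real_distribution_axioms_def prob_space_exponential_density)

lemma cdf_exponential_density:
  assumes "0 < l" "0 \<le> a"
  shows "cdf (density lborel (exponential_density l)) a = 1 - exp (- l * a)"
proof -
  interpret real_distribution "density lborel (exponential_density l)"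
    using assms(1) by (rule real_distribution_exponential_density)
  have "ennreal (cdf (density lborel (exponential_density l)) a) = ennreal (1 - exp (- l * a))"
    using emeasure_erlang_density[OF assms(1), of 0 a] assms(2)
    by (simp add: cdf_def emeasure_eq_measure erlang_CDF_0)
  then show ?thesis
    using assms by (simp add: cdf_nonneg mult_nonneg_nonneg)
qed

lemma emeasure_exponential_density_Ioc:
  assumes "0 < l" "0 \<le> a" "0 \<le> t"
  shows "emeasure (density lborel (exponential_density l)) {a<..a + t}
       = ennreal (exp (- l * a) * (1 - exp (- l * t)))"
proof -
  interpret real_distribution "density lborel (exponential_density l)"
    using assms(1) by (rule real_distribution_exponential_density)
  have "exp (- l * (a + t)) = exp (- l * a) * exp (- l * t)"
    by (simp add: distrib_left exp_add[symmetric])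
  then show ?thesis
    using assms by (simp add: emeasure_Ioc cdf_exponential_density right_diff_distrib)
qed

lemma emeasure_exponential_density_Icc:
  assumes "0 < l" "0 \<le> a" "0 \<le> t"
  shows "emeasure (density lborel (exponential_density l)) {a..a + t}
       = ennreal (exp (- l * a) * (1 - exp (- l * t)))"
proof -
  have "AE x in density lborel (exponential_density l). x \<noteq> a"
    by (subst AE_density) (auto intro: AE_mp[OF AE_lborel_singleton])
  then have "emeasure (density lborel (exponential_density l)) {a..a + t}
           = emeasure (density lborel (exponential_density l)) {a<..a + t}"
    by (intro emeasure_eq_AE) auto
  then show ?thesis
    using assms by (simp add: emeasure_exponential_density_Ioc)
qed

lemma prod_emeasure_exponential_density_intervals:
  fixes \<beta> :: "'i \<Rightarrow> real"
  assumes "finite J" "\<And>j. 0 < \<beta> j" "0 \<le> y" "0 \<le> t"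
    and intervals: "\<And>j. S j = {y<..y + t} \<or> S j = {y..y + t}"
  shows "(\<Prod>j\<in>J. emeasure (density lborel (exponential_density (\<beta> j))) (S j))
       = ennreal (exp (- (\<Sum>j\<in>J. \<beta> j) * y) * (\<Prod>j\<in>J. 1 - exp (- \<beta> j * t)))"
proof -
  have "(\<Prod>j\<in>J. emeasure (density lborel (exponential_density (\<beta> j))) (S j))
      = (\<Prod>j\<in>J. ennreal (exp (- \<beta> j * y) * (1 - exp (- \<beta> j * t))))"
  proof (intro prod.cong refl)
    fix j
    show "emeasure (density lborel (exponential_density (\<beta> j))) (S j)
        = ennreal (exp (- \<beta> j * y) * (1 - exp (- \<beta> j * t)))"
      using intervals[of j] assms(2-4)
      by (auto simp: emeasure_exponential_density_Ioc emeasure_exponential_density_Icc)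
  qed
  also have "\<dots> = ennreal (\<Prod>j\<in>J. exp (- \<beta> j * y) * (1 - exp (- \<beta> j * t)))"
    using assms by (intro prod_ennreal) (auto simp: less_imp_le)
  also have "(\<Prod>j\<in>J. exp (- \<beta> j * y) * (1 - exp (- \<beta> j * t)))
      = exp (- (\<Sum>j\<in>J. \<beta> j) * y) * (\<Prod>j\<in>J. 1 - exp (- \<beta> j * t))"
    using assms(1) by (simp add: prod.distrib exp_sum[symmetric] sum_distrib_right sum_negf)
  finally show ?thesis .
qed

lemma nn_integral_exponential_density_exp:
  assumes "0 < l" "0 \<le> c"
  shows "(\<integral>\<^sup>+y. ennreal (exp (- c * y)) \<partial>density lborel (exponential_density l)) = ennreal (l / (l + c))"
proof -
  have "(\<integral>\<^sup>+y. ennreal (exp (- c * y)) \<partial>density lborel (exponential_density l))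
      = (\<integral>\<^sup>+y. ennreal (l / (l + c)) * ennreal (exponential_density (l + c) y) \<partial>lborel)"
    using assms
    by (subst nn_integral_density)
       (auto intro!: nn_integral_cong simp: exponential_density_def ennreal_mult'[symmetric]
                     field_simps exp_add[symmetric])
  also have "\<dots> = ennreal (l / (l + c)) * emeasure (density lborel (exponential_density (l + c))) UNIV"
    by (simp add: nn_integral_cmult emeasure_density)
  also have "\<dots> = ennreal (l / (l + c))"
    using prob_space.emeasure_space_1[OF prob_space_exponential_density, of "l + c"] assms by simp
  finally show ?thesis .
qed

lemma (in product_sigma_finite) emeasure_PiM_insert_section:
  assumes J: "finite J" "i \<notin> J" and B: "B \<in> sets (PiM (insert i J) M)"
    and S: "\<And>y j. j \<in> J \<Longrightarrow> S y j \<in> sets (M j)"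
    and slice: "\<And>x y. x \<in> space (PiM J M) \<Longrightarrow> y \<in> space (M i) \<Longrightarrow>
                    x(i := y) \<in> B \<longleftrightarrow> x \<in> PiE J (S y)"
  shows "emeasure (PiM (insert i J) M) B = (\<integral>\<^sup>+y. (\<Prod>j\<in>J. emeasure (M j) (S y j)) \<partial>M i)"
proof -
  have "emeasure (PiM (insert i J) M) B = (\<integral>\<^sup>+x. indicator B x \<partial>PiM (insert i J) M)"
    using B by simp
  also have "\<dots> = (\<integral>\<^sup>+y. \<integral>\<^sup>+x. indicator B (x(i := y)) \<partial>PiM J M \<partial>M i)"
    using J B by (intro product_nn_integral_insert_rev) auto
  also have "\<dots> = (\<integral>\<^sup>+y. \<integral>\<^sup>+x. indicator (PiE J (S y)) x \<partial>PiM J M \<partial>M i)"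
    using slice by (intro nn_integral_cong) (simp split: split_indicator)
  also have "\<dots> = (\<integral>\<^sup>+y. (\<Prod>j\<in>J. emeasure (M j) (S y j)) \<partial>M i)"
    using J S by (intro nn_integral_cong) (simp add: sets_PiM_I_finite emeasure_PiM)
  finally show ?thesis .
qed

(* Ties for the minimum are broken in favour of the smallest index, so that the events for
   different i are disjoint pointwise, not merely up to a null set. *)
definition first_min_within :: "'i::linorder set \<Rightarrow> real \<Rightarrow> ('i \<Rightarrow> real) \<Rightarrow> 'i \<Rightarrow> bool" where
  "first_min_within I t x i \<longleftrightarrow> (\<forall>j\<in>I. x i \<le> x j \<and> x j \<le> x i + t \<and> (j < i \<longrightarrow> x i < x j))"

lemma first_min_within_unique:
  assumes "i \<in> I" "i' \<in> I" "first_min_within I t x i" "first_min_within I t x i'"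
  shows "i = i'"
  using assms unfolding first_min_within_def
  by (metis linorder_neqE order.strict_iff_not)

lemma spread_le_iff_first_min_within:
  fixes x :: "'i::linorder \<Rightarrow> real"
  assumes I: "finite I" "I \<noteq> {}"
  shows "Max (x ` I) - Min (x ` I) \<le> t \<longleftrightarrow> (\<exists>i\<in>I. first_min_within I t x i)"
proof
  assume spread: "Max (x ` I) - Min (x ` I) \<le> t"
  define i where "i = Min {j \<in> I. x j = Min (x ` I)}"
  have "Min (x ` I) \<in> x ` I"
    using I by (intro Min_in) auto
  then have "{j \<in> I. x j = Min (x ` I)} \<noteq> {}"
    by force
  then have i: "i \<in> I" "x i = Min (x ` I)"
    using Min_in[of "{j \<in> I. x j = Min (x ` I)}"] I by (auto simp: i_def)
  have first: "i \<le> j" if "j \<in> I" "x j = Min (x ` I)" for j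
    using that I by (simp add: i_def)
  have "x i \<le> x j" "x j \<le> x i + t" if "j \<in> I" for j
  proof -
    have "Min (x ` I) \<le> x j" "x j \<le> Max (x ` I)"
      using that I by (auto intro: Min_le Max_ge)
    then show "x i \<le> x j" "x j \<le> x i + t"
      using i spread by auto
  qed
  with first i have "first_min_within I t x i"
    unfolding first_min_within_def by (force simp: order.strict_iff_order)
  with i show "\<exists>i\<in>I. first_min_within I t x i" by blast
next
  assume "\<exists>i\<in>I. first_min_within I t x i"
  then obtain i where "i \<in> I" "first_min_within I t x i" by blast
  then have "Max (x ` I) \<le> x i + t" "x i \<le> Min (x ` I)"
    using I by (auto simp: first_min_within_def)
  then show "Max (x ` I) - Min (x ` I) \<le> t" by simp
qed

lemma first_min_within_insert_fun_upd:
  assumes "i \<notin> J" "0 \<le> t"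
  shows "first_min_within (insert i J) t (x(i := y)) i
     \<longleftrightarrow> (\<forall>j\<in>J. x j \<in> (if j < i then {y<..y + t} else {y..y + t}))"
proof -
  have "(x(i := y)) j = x j" if "j \<in> J" for j
    using that assms(1) by auto
  then show ?thesis
    using assms(2) unfolding first_min_within_def by auto
qed

lemma sets_PiM_first_min_within:
  fixes M :: "'i::linorder \<Rightarrow> real measure"
  assumes "finite I" "i \<in> I" "\<And>j. sets (M j) = sets borel"
  shows "{x \<in> space (PiM I M). first_min_within I t x i} \<in> sets (PiM I M)"
  unfolding first_min_within_def
proof (rule sets.sets_Collect_finite_All[OF _ assms(1)])
  have component: "(\<lambda>x. x j) \<in> borel_measurable (PiM I M)" if "j \<in> I" for j
    using measurable_component_singleton[OF that, of M] assms(3) measurable_cong_sets by blast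
  fix j assume "j \<in> I"
  then have [measurable]:
      "Measurable.pred (PiM I M) (\<lambda>x. x i \<le> x j)"
      "Measurable.pred (PiM I M) (\<lambda>x. x j \<le> x i + t)"
      "Measurable.pred (PiM I M) (\<lambda>x. x i < x j)"
    using component assms(2) unfolding Measurable.pred_def
    by (auto intro: borel_measurable_le borel_measurable_less borel_measurable_add)
  show "{x \<in> space (PiM I M). x i \<le> x j \<and> x j \<le> x i + t \<and> (j < i \<longrightarrow> x i < x j)} \<in> sets (PiM I M)"
    by measurable
qed

lemma emeasure_PiM_first_min_within:
  fixes M :: "'i::linorder \<Rightarrow> real measure"
  assumes "product_sigma_finite M" and I: "finite I" "i \<in> I" and t: "0 \<le> t"
    and borel: "\<And>j. sets (M j) = sets borel"
  shows "emeasure (PiM I M) {x \<in> space (PiM I M). first_min_within I t x i}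
       = (\<integral>\<^sup>+y. (\<Prod>j\<in>I - {i}. emeasure (M j) (if j < i then {y<..y + t} else {y..y + t})) \<partial>M i)"
proof -
  interpret product_sigma_finite M
    by fact
  define J where "J = I - {i}"
  have J: "I = insert i J" "i \<notin> J" "finite J"
    using I by (auto simp: J_def)
  define B where "B = {x \<in> space (PiM I M). first_min_within I t x i}"
  define S where "S = (\<lambda>y j. if j < i then {y<..y + t} else {y..y + t})"
  have space: "space (M j) = UNIV" for j
    using sets_eq_imp_space_eq[OF borel[of j]] by simp
  have "B \<in> sets (PiM I M)"
    unfolding B_def using I borel by (rule sets_PiM_first_min_within)
  moreover have "x(i := y) \<in> B \<longleftrightarrow> x \<in> PiE J (S y)" if x: "x \<in> space (PiM J M)" for x y
  proof -
    have "x(i := y) \<in> space (PiM I M)"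
      using x J(1) by (auto simp: space_PiM space PiE_iff extensional_def)
    moreover have "first_min_within I t (x(i := y)) i \<longleftrightarrow> (\<forall>j\<in>J. x j \<in> S y j)"
      unfolding J(1) S_def using J(2) t by (rule first_min_within_insert_fun_upd)
    ultimately show ?thesis
      using x by (simp add: B_def PiE_iff space_PiM space)
  qed
  ultimately have "emeasure (PiM I M) B = (\<integral>\<^sup>+y. (\<Prod>j\<in>J. emeasure (M j) (S y j)) \<partial>M i)"
    unfolding J(1) using J borel by (intro emeasure_PiM_insert_section) (auto simp: S_def)
  then show ?thesis
    by (simp add: B_def S_def J_def)
qed

lemma measure_PiM_exponential_first_min_within:
  fixes \<beta> :: "'i::linorder \<Rightarrow> real"
  assumes I: "finite I" "i \<in> I" and \<beta>: "\<And>j. 0 < \<beta> j" and t: "0 \<le> t"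
  defines "D \<equiv> \<lambda>j. density lborel (exponential_density (\<beta> j))"
  shows "measure (PiM I D) {x \<in> space (PiM I D). first_min_within I t x i}
       = \<beta> i / (\<Sum>j\<in>I. \<beta> j) * (\<Prod>j\<in>I - {i}. 1 - exp (- \<beta> j * t))"
proof -
  have "product_sigma_finite D"
    unfolding D_def using \<beta>
    by (intro product_sigma_finite.intro prob_space_imp_sigma_finite prob_space_exponential_density)
  define J where "J = I - {i}"
  have J: "I = insert i J" "i \<notin> J" "finite J"
    using I by (auto simp: J_def)
  define B where "B = {x \<in> space (PiM I D). first_min_within I t x i}"
  define S where "S = (\<lambda>y j. if j < i then {y<..y + t} else {y..y + t})"
  define c where "c = (\<Sum>j\<in>J. \<beta> j)"
  define P where "P = (\<Prod>j\<in>J. 1 - exp (- \<beta> j * t))"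
  have c: "0 \<le> c" and P: "0 \<le> P"
    using \<beta> t by (auto simp: c_def P_def less_imp_le intro!: sum_nonneg prod_nonneg)
  have "emeasure (PiM I D) B = (\<integral>\<^sup>+y. (\<Prod>j\<in>J. emeasure (D j) (S y j)) \<partial>D i)"
    unfolding B_def S_def J_def using emeasure_PiM_first_min_within[OF \<open>product_sigma_finite D\<close> I t]
    by (simp add: D_def)
  also have "\<dots> = (\<integral>\<^sup>+y. ennreal P * ennreal (exp (- c * y)) \<partial>D i)"
  proof (rule nn_integral_cong_AE)
    have "AE y in D i. 0 \<le> y"
      unfolding D_def by (subst AE_density) (auto simp: exponential_density_def)
    moreover have "(\<Prod>j\<in>J. emeasure (D j) (S y j)) = ennreal P * ennreal (exp (- c * y))" if "0 \<le> y" for y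
      using prod_emeasure_exponential_density_intervals[OF J(3) \<beta> that t, of "S y"] P
      by (simp add: D_def S_def P_def c_def ennreal_mult mult.commute)
    ultimately show "AE y in D i. (\<Prod>j\<in>J. emeasure (D j) (S y j)) = ennreal P * ennreal (exp (- c * y))"
      by auto
  qed
  also have "\<dots> = ennreal P * ennreal (\<beta> i / (\<beta> i + c))"
    unfolding D_def using nn_integral_exponential_density_exp[OF \<beta> c] by (simp add: nn_integral_cmult)
  finally have "measure (PiM I D) B = P * (\<beta> i / (\<beta> i + c))"
    using P \<beta>[of i] c by (simp add: measure_def ennreal_mult'[symmetric])
  moreover have "(\<Sum>j\<in>I. \<beta> j) = \<beta> i + c"
    unfolding c_def J(1) using J(2,3) by simp
  moreover have "(\<Prod>j\<in>I - {i}. 1 - exp (- \<beta> j * t)) = P"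
    unfolding P_def J_def ..
  ultimately show ?thesis
    unfolding B_def by simp
qed

lemma measure_PiM_exponential_spread_le:
  fixes \<beta> :: "'i::linorder \<Rightarrow> real"
  assumes I: "finite I" "I \<noteq> {}" and \<beta>: "\<And>j. 0 < \<beta> j" and t: "0 \<le> t"
  defines "D \<equiv> \<lambda>j. density lborel (exponential_density (\<beta> j))"
  shows "measure (PiM I D) {x \<in> space (PiM I D). Max (x ` I) - Min (x ` I) \<le> t}
       = (\<Sum>i\<in>I. \<beta> i / (\<Sum>j\<in>I. \<beta> j) * (\<Prod>j\<in>I - {i}. 1 - exp (- \<beta> j * t)))"
proof -
  interpret prob_space "PiM I D"
    unfolding D_def using \<beta> by (intro prob_space_PiM prob_space_exponential_density)
  define B where "B = (\<lambda>i. {x \<in> space (PiM I D). first_min_within I t x i})"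
  have "{x \<in> space (PiM I D). Max (x ` I) - Min (x ` I) \<le> t} = (\<Union>i\<in>I. B i)"
    using spread_le_iff_first_min_within[OF I] by (auto simp: B_def)
  then have "measure (PiM I D) {x \<in> space (PiM I D). Max (x ` I) - Min (x ` I) \<le> t}
      = (\<Sum>i\<in>I. measure (PiM I D) (B i))"
  proof (simp only:, intro measure_finite_Union)
    show "B ` I \<subseteq> sets (PiM I D)"
      unfolding B_def D_def using I(1) by (auto intro: sets_PiM_first_min_within)
    show "disjoint_family_on B I"
      unfolding disjoint_family_on_def B_def using first_min_within_unique by blast
  qed (simp_all add: I(1))
  also have "\<dots> = (\<Sum>i\<in>I. \<beta> i / (\<Sum>j\<in>I. \<beta> j) * (\<Prod>j\<in>I - {i}. 1 - exp (- \<beta> j * t)))"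
    unfolding B_def D_def using I(1) \<beta> t
    by (intro sum.cong refl measure_PiM_exponential_first_min_within) auto
  finally show ?thesis .
qed

lemma (in prob_space) distr_indep_vars_PiM_density:
  fixes X :: "'i \<Rightarrow> 'a \<Rightarrow> real"
  assumes "I \<noteq> {}" "indep_vars (\<lambda>_. borel) X I"
    and distributed: "\<And>i. i \<in> I \<Longrightarrow> distributed M lborel (X i) (f i)"
  shows "distr M (PiM I (\<lambda>_. borel)) (\<lambda>\<omega>. \<lambda>i\<in>I. X i \<omega>) = PiM I (\<lambda>i. density lborel (f i))"
proof -
  have rv: "random_variable borel (X i)" if "i \<in> I" for i
    using distributed_measurable[OF distributed[OF that]] by simp
  have "distr M (PiM I (\<lambda>_. borel)) (\<lambda>\<omega>. \<lambda>i\<in>I. X i \<omega>) = PiM I (\<lambda>i. distr M borel (X i))"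
    using indep_vars_iff_distr_eq_PiM'[where M'="\<lambda>_. borel" and X=X, OF assms(1) rv] assms(2) by blast
  also have "\<dots> = PiM I (\<lambda>i. density lborel (f i))"
  proof (rule PiM_cong[OF refl])
    fix i assume "i \<in> I"
    have "distr M borel (X i) = distr M lborel (X i)"
      by (rule distr_cong) auto
    then show "distr M borel (X i) = density lborel (f i)"
      using distributed[OF \<open>i \<in> I\<close>] by (simp add: distributed_distr_eq_density)
  qed
  finally show ?thesis .
qed

lemma (in prob_space) prob_indep_exponential_spread_le:
  fixes E :: "'i::linorder \<Rightarrow> 'a \<Rightarrow> real"
  assumes I: "finite I" "I \<noteq> {}" and \<alpha>: "\<And>i. i \<in> I \<Longrightarrow> 0 < \<alpha> i" and t: "0 \<le> t"
    and indep: "indep_vars (\<lambda>_. borel) E I"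
    and exponential: "\<And>i. i \<in> I \<Longrightarrow> distributed M lborel (E i) (exponential_density (\<alpha> i))"
  shows "prob {\<omega> \<in> space M. Max ((\<lambda>i. E i \<omega>) ` I) - Min ((\<lambda>i. E i \<omega>) ` I) \<le> t}
       = (\<Sum>i\<in>I. \<alpha> i / (\<Sum>j\<in>I. \<alpha> j) * (\<Prod>j\<in>I - {i}. 1 - exp (- \<alpha> j * t)))"
proof -
  \<comment> \<open>Rates off \<open>I\<close> are irrelevant; making them positive turns \<open>D\<close> into a product of probability spaces.\<close>
  define \<beta> where "\<beta> = (\<lambda>j. if j \<in> I then \<alpha> j else 1)"
  define D where "D = (\<lambda>j. density lborel (exponential_density (\<beta> j)))"
  define Y where "Y = (\<lambda>\<omega>. \<lambda>i\<in>I. E i \<omega>)"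
  define A where "A = {x \<in> space (PiM I D). Max (x ` I) - Min (x ` I) \<le> t}"
  have \<beta>: "0 < \<beta> j" for j
    using \<alpha> by (simp add: \<beta>_def)
  have sets_D [measurable_cong]: "sets (PiM I D) = sets (PiM I (\<lambda>_. borel))"
    by (intro sets_PiM_cong) (simp_all add: D_def)
  have "A \<in> sets (PiM I D)"
    unfolding A_def using I(1) by measurable
  then have A: "A \<in> sets (PiM I (\<lambda>_. borel))"
    using sets_D by simp
  have Y: "Y \<in> measurable M (PiM I (\<lambda>_. borel))"
    unfolding Y_def using distributed_measurable[OF exponential] by (auto intro!: measurable_restrict)
  have "PiM I (\<lambda>i. density lborel (exponential_density (\<alpha> i))) = PiM I D"
    by (intro PiM_cong) (simp_all add: D_def \<beta>_def)
  then have distr_Y: "distr M (PiM I (\<lambda>_. borel)) Y = PiM I D"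
    using distr_indep_vars_PiM_density[OF I(2) indep exponential] by (simp add: Y_def)
  have "Y \<omega> \<in> space (PiM I D)" "Y \<omega> ` I = (\<lambda>i. E i \<omega>) ` I" for \<omega>
    by (auto simp: Y_def D_def space_PiM)
  then have "{\<omega> \<in> space M. Max ((\<lambda>i. E i \<omega>) ` I) - Min ((\<lambda>i. E i \<omega>) ` I) \<le> t} = Y -` A \<inter> space M"
    by (auto simp: A_def)
  also have "prob \<dots> = measure (PiM I D) A"
    using measure_distr[OF Y A] distr_Y by simp
  also have "\<dots> = (\<Sum>i\<in>I. \<beta> i / (\<Sum>j\<in>I. \<beta> j) * (\<Prod>j\<in>I - {i}. 1 - exp (- \<beta> j * t)))"
    unfolding A_def D_def by (rule measure_PiM_exponential_spread_le[OF I \<beta> t])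
  also have "\<dots> = (\<Sum>i\<in>I. \<alpha> i / (\<Sum>j\<in>I. \<alpha> j) * (\<Prod>j\<in>I - {i}. 1 - exp (- \<alpha> j * t)))"
    by (simp add: \<beta>_def cong: sum.cong_simp prod.cong_simp)
  finally show ?thesis .
qed


theorem lemma1:
  fixes M :: "'a measure" and k :: nat and \<alpha> :: "nat \<Rightarrow> real"
    and E :: "nat \<Rightarrow> 'a \<Rightarrow> real" and tbar :: real
  assumes "prob_space M"
    and "k \<ge> 1"
    and "\<And>i. i \<in> {1..k} \<Longrightarrow> \<alpha> i > 0"
    and "tbar > 0"
    and "prob_space.indep_vars M (\<lambda>_. borel) E {1..k}"
    and "\<And>i. i \<in> {1..k} \<Longrightarrow> distributed M lborel (E i) (exponential_density (\<alpha> i))"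
  shows "measure M {\<omega> \<in> space M.
            Max ((\<lambda>i. E i \<omega>) ` {1..k}) - Min ((\<lambda>i. E i \<omega>) ` {1..k}) \<le> tbar}
         = (\<Sum>i=1..k. \<alpha> i / (\<Sum>j=1..k. \<alpha> j) *
              (\<Prod>j\<in>{1..k} - {i}. 1 - exp (- \<alpha> j * tbar)))"
proof -
  interpret prob_space M
    by (rule assms(1))
  have "{1..k} \<noteq> {}"
    using assms(2) by simp
  then show ?thesis
    using prob_indep_exponential_spread_le[of "{1..k}" \<alpha> tbar E] assms(3-6) by simp
qed

end
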